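(* Let $\mathcal{V}$ be a finite set and $\theta\mapsto\boldsymbol{z}_\theta\in\mathbb{R}^{|\mathcal{V}|}$, $\theta\in\mathbb{R}^p$, a differentiable logit map; let $\pi_\theta(a)=\frac{\exp z_\theta(a)}{\sum_{a'}\exp z_\theta(a')}$. Fix behavioral logits $\boldsymbol{z}_{\text{old}}\in\mathbb{R}^{|\mathcal{V}|}$, an advantage vector $\boldsymbol{A}\in\mathbb{R}^{|\mathcal{V}|}$ and $\beta>0$, and set $\boldsymbol{z}^*=\boldsymbol{z}_{\text{old}}+\boldsymbol{A}/\beta$, $\pi^*(a)=\frac{\exp z^*(a)}{\sum_{a'}\exp z^*(a')}$. Define $$\mathcal{L}_{\text{LCO-MSE}}(\theta)=\frac{1}{|\mathcal{V}|}\sum_{a}(z_\theta(a)-z^*(a))^2,\quad \mathcal{L}_{\text{LCO-LCH}}(\theta)=\frac{1}{|\mathcal{V}|}\sum_{a}\log\cosh(z_\theta(a)-z^*(a)),\quad \mathcal{L}_{\text{LCO-KLD}}(\theta)=\sum_{a}\pi^*(a)\log\frac{\pi^*(a)}{\pi_\theta(a)}.$$ At a given $\theta$, let $\sigma_{\max}$ be the largest singular value of the Jacobian $\partial\boldsymbol{z}_\theta/\partial\theta\in\mathbb{R}^{|\mathcal{V}|\times p}$. Then, with Euclidean norms, $$\|\nabla_\theta\mathcal{L}_{\text{LCO-MSE}}\|\le\frac{2}{|\mathcal{V}|}\sigma_{\max}\sqrt{|\mathcal{V}|\,\mathcal{L}_{\text{LCO-MSE}}},\qquad \|\nabla_\theta\mathcal{L}_{\text{LCO-LCH}}\|\le\frac{1}{|\mathcal{V}|}\sigma_{\max}\sqrt{|\mathcal{V}|\bigl(1-\exp(-2\mathcal{L}_{\text{LCO-LCH}})\bigr)},$$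 $$\|\nabla_\theta\mathcal{L}_{\text{LCO-KLD}}\|\le\sigma_{\max}\sqrt{2\,\mathcal{L}_{\text{LCO-KLD}}},$$ where all losses and gradients are evaluated at $\theta$.
   Context: These are the single-time-step Logits Convex Optimization (LCO) objectives, which fit the policy's logits (or distribution) to the optimal target $\boldsymbol{z}^*$ (resp. $\pi^*$) derived from the KL-regularized advantage-maximization objective. *)

theory Defs
  imports "HOL-Analysis.Analysis"
begin

text \<open>Vocabulary V is a finite type 'v; logit vectors are real^'v; parameters are real^'p.\<close>

definition softmax :: "real^'v::finite \<Rightarrow> 'v \<Rightarrow> real" where
  "softmax z a = exp (z $ a) / (\<Sum>b\<in>UNIV. exp (z $ b))"

definition zstar :: "real^'v::finite \<Rightarrow> real^'v \<Rightarrow> real \<Rightarrow> real^'v" where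
  "zstar zold A \<beta> = zold + (1 / \<beta>) *\<^sub>R A"

text \<open>Losses as functions of the current logits w, given the target logits zs.\<close>
definition lco_mse :: "real^'v::finite \<Rightarrow> real^'v \<Rightarrow> real" where
  "lco_mse zs w = (1 / real CARD('v)) * (\<Sum>a\<in>UNIV. (w $ a - zs $ a)^2)"

definition lco_lch :: "real^'v::finite \<Rightarrow> real^'v \<Rightarrow> real" where
  "lco_lch zs w = (1 / real CARD('v)) * (\<Sum>a\<in>UNIV. ln (cosh (w $ a - zs $ a)))"

definition lco_kld :: "real^'v::finite \<Rightarrow> real^'v \<Rightarrow> real" where
  "lco_kld zs w = (\<Sum>a\<in>UNIV. softmax zs a * ln (softmax zs a / softmax w a))"

definition gradient :: "(real^'p::finite \<Rightarrow> real) \<Rightarrow> real^'p \<Rightarrow> real^'p" where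
  "gradient f x = (\<chi> i. frechet_derivative f (at x) (axis i 1))"

text \<open>Largest singular value of the Jacobian = Euclidean operator (spectral) norm.\<close>
definition sigma_max :: "(real^'p::finite \<Rightarrow> real^'v::finite) \<Rightarrow> real^'p \<Rightarrow> real" where
  "sigma_max z \<theta> = onorm (frechet_derivative z (at \<theta>))"

end

theory Submission
  imports Defs
begin

text \<open>
  By the chain rule, \<open>\<nabla>\<^sub>\<theta> L(z\<^sub>\<theta>) = J\<^sup>T \<nabla>L(z\<^sub>\<theta>)\<close> for the Jacobian \<open>J\<close> of the logit map, so
  \<open>\<parallel>\<nabla>\<^sub>\<theta> L(z\<^sub>\<theta>)\<parallel> \<le> \<sigma>\<^sub>m\<^sub>a\<^sub>x \<parallel>\<nabla>L(z\<^sub>\<theta>)\<parallel>\<close>, and it remains to bound the gradient of each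
  loss in logit space by the value of the loss. For the squared error the gradient is
  \<open>(2/|V|)(w - z\<^sup>*)\<close>, whose norm is exactly \<open>(2/|V|) sqrt(|V| L)\<close>. For log-cosh it is
  \<open>(1/|V|) tanh(w - z\<^sup>*)\<close>; since \<open>tanh\<^sup>2 d = 1 - exp(-2 ln cosh d)\<close>, Jensen's inequality for
  \<open>exp\<close> gives \<open>\<Sum> tanh\<^sup>2 \<le> |V| (1 - exp(-2 L))\<close>. For the KL divergence it is
  \<open>\<pi>\<^sub>w - \<pi>\<^sup>*\<close>, and summing the pointwise inequality \<open>(p - q)\<^sup>2 \<le> 2 (p ln(p/q) - p + q)\<close>
  for \<open>p, q \<in> (0, 1]\<close> over the two probability vectors gives \<open>\<parallel>\<pi>\<^sub>w - \<pi>\<^sup>*\<parallel>\<^sup>2 \<le> 2 KL\<close>.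
\<close>

lemma gradient_inner:
  fixes f :: "real^'p::finite \<Rightarrow> real"
  assumes "f differentiable (at x)"
  shows "gradient f x \<bullet> h = frechet_derivative f (at x) h"
proof -
  have lin: "linear (frechet_derivative f (at x))"
    using assms frechet_derivative_works has_derivative_linear by blast
  have "gradient f x \<bullet> h = (\<Sum>i\<in>UNIV. h $ i * frechet_derivative f (at x) (axis i 1))"
    by (simp add: gradient_def inner_vec_def mult.commute)
  also have "\<dots> = frechet_derivative f (at x) (\<Sum>i\<in>UNIV. h $ i *\<^sub>R axis i 1)"
    by (simp add: linear_sum[OF lin] linear_scale[OF lin])
  also have "(\<Sum>i\<in>UNIV. h $ i *\<^sub>R axis i 1) = h"
    by (simp add: vec_eq_iff axis_def if_distrib cong: if_cong)
  finally show ?thesis .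
qed

lemma norm_adjoint_le_onorm:
  fixes J :: "'a::real_inner \<Rightarrow> 'b::real_inner"
  assumes J: "bounded_linear J" and adjoint: "\<And>h. g \<bullet> h = G \<bullet> J h"
  shows "norm g \<le> onorm J * norm G"
proof (cases "norm g = 0")
  case True
  then show ?thesis by (simp add: onorm_pos_le[OF J])
next
  case False
  have "norm g * norm g = G \<bullet> J g" by (simp flip: adjoint add: norm_eq_sqrt_inner)
  also have "\<dots> \<le> norm G * norm (J g)" by (rule norm_cauchy_schwarz)
  also have "\<dots> \<le> norm G * (onorm J * norm g)" by (intro mult_left_mono onorm[OF J]) simp
  finally have "norm g * norm g \<le> (onorm J * norm G) * norm g" by (simp only: mult_ac)
  with False show ?thesis by simp
qed

lemma norm_gradient_comp_le:
  fixes z :: "real^'p::finite \<Rightarrow> real^'v::finite" and L :: "real^'v \<Rightarrow> real"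
  assumes z: "z differentiable (at \<theta>)"
    and L: "(L has_derivative (\<lambda>h. G \<bullet> h)) (at (z \<theta>))"
    and G: "norm G \<le> B"
  shows "norm (gradient (\<lambda>t. L (z t)) \<theta>) \<le> sigma_max z \<theta> * B"
proof -
  define J where "J = frechet_derivative z (at \<theta>)"
  have zJ: "(z has_derivative J) (at \<theta>)"
    using z frechet_derivative_works unfolding J_def by blast
  then have J: "bounded_linear J" by (rule has_derivative_bounded_linear)
  have LJ: "((\<lambda>t. L (z t)) has_derivative (\<lambda>h. G \<bullet> J h)) (at \<theta>)"
    using diff_chain_at[OF zJ L] by (simp add: o_def)
  have "norm (gradient (\<lambda>t. L (z t)) \<theta>) \<le> onorm J * norm G"
  proof (rule norm_adjoint_le_onorm[OF J])
    fix h
    show "gradient (\<lambda>t. L (z t)) \<theta> \<bullet> h = G \<bullet> J h"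
      using gradient_inner[OF differentiableI[OF LJ]]
      by (simp flip: frechet_derivative_at[OF LJ])
  qed
  also have "\<dots> \<le> onorm J * B" by (rule mult_left_mono[OF G onorm_pos_le[OF J]])
  finally show ?thesis unfolding sigma_max_def J_def .
qed

lemma has_derivative_sum_components:
  fixes \<phi> \<phi>' :: "'v::finite \<Rightarrow> real \<Rightarrow> real" and w :: "real^'v"
  assumes "\<And>a. (\<phi> a has_real_derivative \<phi>' a (w $ a)) (at (w $ a))"
  shows "((\<lambda>x. \<Sum>a\<in>UNIV. \<phi> a (x $ a))
           has_derivative (\<lambda>h. (\<chi> a. \<phi>' a (w $ a)) \<bullet> h)) (at w)"
proof -
  have "((\<lambda>x. \<phi> a (x $ a)) has_derivative (\<lambda>h. h $ a * \<phi>' a (w $ a))) (at w)" for a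
    by (rule DERIV_compose_FDERIV[OF assms
          bounded_linear_imp_has_derivative[OF bounded_linear_vec_nth]])
  then have "((\<lambda>x. \<Sum>a\<in>UNIV. \<phi> a (x $ a))
      has_derivative (\<lambda>h. \<Sum>a\<in>UNIV. h $ a * \<phi>' a (w $ a))) (at w)"
    by (rule has_derivative_sum)
  then show ?thesis
    by (rule has_derivative_eq_rhs) (simp add: inner_vec_def mult.commute)
qed

lemma norm_vec_power2: "(norm (x :: real^'v::finite))^2 = (\<Sum>a\<in>UNIV. (x $ a)^2)"
  unfolding power2_norm_eq_inner inner_vec_def by (simp add: power2_eq_square)

lemma lco_mse_eq_norm:
  fixes zs w :: "real^'a::finite"
  shows "lco_mse zs w = (norm (w - zs))^2 / real CARD('a)"
  by (simp add: lco_mse_def norm_vec_power2)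

lemma has_derivative_lco_mse:
  fixes zs w :: "real^'a::finite"
  shows "(lco_mse zs has_derivative (\<lambda>h. ((2 / real CARD('a)) *\<^sub>R (w - zs)) \<bullet> h)) (at w)"
proof -
  have "lco_mse zs = (\<lambda>x. \<Sum>a\<in>UNIV. (x $ a - zs $ a)^2 / real CARD('a))"
    by (simp add: fun_eq_iff lco_mse_def sum_divide_distrib)
  moreover have "(2 / real CARD('a)) *\<^sub>R (w - zs) = (\<chi> a. 2 * (w $ a - zs $ a) / real CARD('a))"
    by (simp add: vec_eq_iff)
  ultimately show ?thesis
    by (simp only:) (rule has_derivative_sum_components, auto intro!: derivative_eq_intros)
qed

lemma norm_lco_mse_gradient:
  fixes zs w :: "real^'a::finite"
  shows "norm ((2 / real CARD('a)) *\<^sub>R (w - zs))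
           = 2 / real CARD('a) * sqrt (real CARD('a) * lco_mse zs w)"
proof -
  have "real CARD('a) * lco_mse zs w = (norm (w - zs))^2" by (simp add: lco_mse_eq_norm)
  then show ?thesis by simp
qed

lemma has_derivative_lco_lch:
  fixes zs w :: "real^'a::finite"
  shows "(lco_lch zs has_derivative
           (\<lambda>h. ((1 / real CARD('a)) *\<^sub>R (\<chi> a. tanh (w $ a - zs $ a))) \<bullet> h)) (at w)"
proof -
  have "lco_lch zs = (\<lambda>x. \<Sum>a\<in>UNIV. ln (cosh (x $ a - zs $ a)) / real CARD('a))"
    by (simp add: fun_eq_iff lco_lch_def sum_divide_distrib)
  moreover have "(1 / real CARD('a)) *\<^sub>R (\<chi> a. tanh (w $ a - zs $ a))
                   = (\<chi> a. tanh (w $ a - zs $ a) / real CARD('a))"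
    by (simp add: vec_eq_iff)
  ultimately show ?thesis
    by (simp only:) (rule has_derivative_sum_components,
        auto intro!: derivative_eq_intros simp: tanh_def)
qed

lemma tanh_power2_eq: "tanh x ^ 2 = 1 - exp (- 2 * ln (cosh x))" for x :: real
proof -
  have "exp (- 2 * ln (cosh x)) = 1 / cosh x ^ 2"
    by (simp add: exp_minus exp_double inverse_eq_divide)
  moreover have "cosh x ^ 2 > 0" by simp
  ultimately show ?thesis
    using cosh_square_eq[of x] by (simp add: tanh_def power_divide field_simps)
qed

lemma sum_tanh_power2_le:
  fixes zs w :: "real^'a::finite"
  shows "(\<Sum>a\<in>UNIV. tanh (w $ a - zs $ a) ^ 2)
           \<le> real CARD('a) * (1 - exp (- 2 * lco_lch zs w))"
proof -
  define n where "n = real CARD('a)"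
  define y where "y a = - 2 * ln (cosh (w $ a - zs $ a))" for a
  have n_pos: "n > 0" unfolding n_def by simp
  have "(\<Sum>a\<in>UNIV. (1 / n) *\<^sub>R y a) = - 2 * lco_lch zs w"
    unfolding y_def lco_lch_def n_def by (simp add: sum_distrib_left algebra_simps)
  moreover have "exp (\<Sum>a\<in>UNIV. (1 / n) *\<^sub>R y a) \<le> (\<Sum>a\<in>UNIV. (1 / n) * exp (y a))"
    by (rule convex_on_sum[OF _ _ exp_convex]) (auto simp: n_def)
  ultimately have "exp (- 2 * lco_lch zs w) \<le> (\<Sum>a\<in>UNIV. exp (y a)) / n"
    by (simp add: sum_divide_distrib)
  then have jensen: "n * exp (- 2 * lco_lch zs w) \<le> (\<Sum>a\<in>UNIV. exp (y a))"
    using n_pos by (simp add: field_simps)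
  have "(\<Sum>a\<in>UNIV. tanh (w $ a - zs $ a) ^ 2) = n - (\<Sum>a\<in>UNIV. exp (y a))"
    by (simp add: tanh_power2_eq y_def sum_subtractf n_def)
  also have "\<dots> \<le> n - n * exp (- 2 * lco_lch zs w)" using jensen by linarith
  finally show ?thesis by (simp add: n_def right_diff_distrib)
qed

lemma norm_lco_lch_gradient_le:
  fixes zs w :: "real^'a::finite"
  shows "norm ((1 / real CARD('a)) *\<^sub>R (\<chi> a. tanh (w $ a - zs $ a)))
           \<le> 1 / real CARD('a) * sqrt (real CARD('a) * (1 - exp (- 2 * lco_lch zs w)))"
proof -
  have "norm (\<chi> a. tanh (w $ a - zs $ a))
          \<le> sqrt (real CARD('a) * (1 - exp (- 2 * lco_lch zs w)))"
    using sum_tanh_power2_le[of w zs] by (intro real_le_rsqrt) (simp add: norm_vec_power2)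
  then show ?thesis by (simp add: divide_right_mono)
qed

lemma pinsker_term_le:
  fixes p q :: real
  assumes p: "0 < p" "p \<le> 1" and q: "0 < q" "q \<le> 1"
  shows "(p - q)^2 \<le> 2 * (p * ln (p / q) - p + q)"
proof -
  define F where "F x = p * ln p - p * ln x - p + x - (p - x)^2 / 2" for x
  have F': "DERIV F x :> (x - p) * (1 - x) / x" if "x > 0" for x
    unfolding F_def using that
    by (auto intro!: derivative_eq_intros simp: field_simps power2_eq_square)
  \<comment> \<open>\<open>F\<close> decreases on \<open>(0, p]\<close> and increases on \<open>[p, 1]\<close>, and \<open>F p = 0\<close>.\<close>
  have "F p \<le> F q"
  proof (cases "p \<le> q")
    case True
    show ?thesis
    proof (rule DERIV_nonneg_imp_nondecreasing[OF True])
      fix x assume "p \<le> x" "x \<le> q"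
      with p q show "\<exists>y. DERIV F x :> y \<and> y \<ge> 0"
        by (intro exI[of _ "(x - p) * (1 - x) / x"]) (auto intro!: F')
    qed
  next
    case False
    show ?thesis
    proof (rule DERIV_nonpos_imp_nonincreasing[of q p F])
      fix x assume "q \<le> x" "x \<le> p"
      with p q show "\<exists>y. DERIV F x :> y \<and> y \<le> 0"
        by (intro exI[of _ "(x - p) * (1 - x) / x"])
          (auto intro!: F' divide_nonpos_pos mult_nonpos_nonneg)
    qed (use False in simp)
  qed
  with p q show ?thesis by (simp add: F_def ln_div right_diff_distrib)
qed

lemma softmax_pos: "0 < softmax z a"
  unfolding softmax_def by (intro divide_pos_pos) (auto intro!: sum_pos)

lemma sum_softmax: "(\<Sum>a\<in>UNIV. softmax z a) = 1"
proof -
  have "(\<Sum>b\<in>UNIV. exp (z $ b)) > 0" by (auto intro!: sum_pos)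
  then show ?thesis unfolding softmax_def by (simp flip: sum_divide_distrib)
qed

lemma softmax_le_1: "softmax z a \<le> 1"
  using member_le_sum[of a UNIV "softmax z"] by (simp add: sum_softmax less_imp_le softmax_pos)

lemma ln_softmax: "ln (softmax z a) = z $ a - ln (\<Sum>b\<in>UNIV. exp (z $ b))"
proof -
  have "(\<Sum>b\<in>UNIV. exp (z $ b)) > 0" by (auto intro!: sum_pos)
  then show ?thesis unfolding softmax_def by (simp add: ln_div)
qed

lemma lco_kld_eq:
  "lco_kld zs w =
     (\<Sum>a\<in>UNIV. softmax zs a * (ln (softmax zs a) - w $ a)) + ln (\<Sum>b\<in>UNIV. exp (w $ b))"
proof -
  have "lco_kld zs w = (\<Sum>a\<in>UNIV. softmax zs a * (ln (softmax zs a) - w $ a)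
                          + softmax zs a * ln (\<Sum>b\<in>UNIV. exp (w $ b)))"
    unfolding lco_kld_def
    by (intro sum.cong refl)
      (simp add: ln_div softmax_pos[THEN dual_order.strict_implies_not_eq] ln_softmax[of w]
        algebra_simps)
  then show ?thesis by (simp add: sum.distrib sum_softmax flip: sum_distrib_right)
qed

lemma has_derivative_lco_kld:
  "(lco_kld zs has_derivative (\<lambda>h. (\<chi> a. softmax w a - softmax zs a) \<bullet> h)) (at w)"
proof -
  define S where "S x = (\<Sum>b\<in>UNIV. exp (x $ b))" for x :: "real^'a"
  have S_pos: "S w > 0" unfolding S_def by (auto intro!: sum_pos)
  have cross_entropy: "((\<lambda>x. \<Sum>a\<in>UNIV. softmax zs a * (ln (softmax zs a) - x $ a))
                 has_derivative (\<lambda>h. (\<chi> a. - softmax zs a) \<bullet> h)) (at w)"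
    by (rule has_derivative_sum_components[where \<phi>' = "\<lambda>a y. - softmax zs a"])
      (auto intro!: derivative_eq_intros)
  have "(S has_derivative (\<lambda>h. (\<chi> a. exp (w $ a)) \<bullet> h)) (at w)"
    unfolding S_def
    by (rule has_derivative_sum_components[where \<phi> = "\<lambda>a. exp" and \<phi>' = "\<lambda>a. exp", simplified])
  then have log_partition: "((\<lambda>x. ln (S x))
      has_derivative (\<lambda>h. ((\<chi> a. exp (w $ a)) \<bullet> h) * inverse (S w))) (at w)"
    by (rule DERIV_compose_FDERIV[where g = S, OF DERIV_ln[OF S_pos]])
  have "lco_kld zs = (\<lambda>x. (\<Sum>a\<in>UNIV. softmax zs a * (ln (softmax zs a) - x $ a)) + ln (S x))"
    by (simp add: fun_eq_iff lco_kld_eq S_def)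
  moreover have "(\<lambda>h. (\<chi> a. - softmax zs a) \<bullet> h + ((\<chi> a. exp (w $ a)) \<bullet> h) * inverse (S w))
      = (\<lambda>h. (\<chi> a. softmax w a - softmax zs a) \<bullet> h)"
    by (simp add: fun_eq_iff inner_vec_def softmax_def S_def sum_subtractf sum_negf
        sum_distrib_left divide_inverse algebra_simps)
  ultimately show ?thesis using has_derivative_add[OF cross_entropy log_partition] by simp
qed

lemma norm_lco_kld_gradient_le:
  "norm (\<chi> a. softmax w a - softmax zs a) \<le> sqrt (2 * lco_kld zs w)"
proof (rule real_le_rsqrt)
  have "(norm (\<chi> a. softmax w a - softmax zs a))^2
          = (\<Sum>a\<in>UNIV. (softmax zs a - softmax w a)^2)"
    by (simp add: norm_vec_power2 power2_commute)
  also have "\<dots> \<le> (\<Sum>a\<in>UNIV.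
      2 * (softmax zs a * ln (softmax zs a / softmax w a) - softmax zs a + softmax w a))"
    by (intro sum_mono pinsker_term_le softmax_pos softmax_le_1)
  also have "\<dots> = 2 * lco_kld zs w"
    by (simp add: lco_kld_def sum.distrib sum_subtractf sum_softmax flip: sum_distrib_left)
  finally show "(norm (\<chi> a. softmax w a - softmax zs a))^2 \<le> 2 * lco_kld zs w" .
qed

theorem proposition4p7:
  fixes z :: "real^'p::finite \<Rightarrow> real^'v::finite"
    and zold A :: "real^'v" and \<beta> :: real and \<theta> :: "real^'p"
  assumes diff: "\<And>t. z differentiable (at t)"
    and beta_pos: "\<beta> > 0"
  defines "zs \<equiv> zstar zold A \<beta>"
  shows "norm (gradient (\<lambda>t. lco_mse zs (z t)) \<theta>)
           \<le> 2 / real CARD('v) * sigma_max z \<theta> * sqrt (real CARD('v) * lco_mse zs (z \<theta>))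
         \<and> norm (gradient (\<lambda>t. lco_lch zs (z t)) \<theta>)
           \<le> 1 / real CARD('v) * sigma_max z \<theta>
               * sqrt (real CARD('v) * (1 - exp (- 2 * lco_lch zs (z \<theta>))))
         \<and> norm (gradient (\<lambda>t. lco_kld zs (z t)) \<theta>)
           \<le> sigma_max z \<theta> * sqrt (2 * lco_kld zs (z \<theta>))"
proof -
  have mse: "norm (gradient (\<lambda>t. lco_mse zs (z t)) \<theta>)
      \<le> sigma_max z \<theta> * (2 / real CARD('v) * sqrt (real CARD('v) * lco_mse zs (z \<theta>)))"
    by (rule norm_gradient_comp_le[OF diff has_derivative_lco_mse
          norm_lco_mse_gradient[THEN eq_refl]])
  have lch: "norm (gradient (\<lambda>t. lco_lch zs (z t)) \<theta>)
      \<le> sigma_max z \<theta> * (1 / real CARD('v)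
           * sqrt (real CARD('v) * (1 - exp (- 2 * lco_lch zs (z \<theta>)))))"
    by (rule norm_gradient_comp_le[OF diff has_derivative_lco_lch norm_lco_lch_gradient_le])
  have kld: "norm (gradient (\<lambda>t. lco_kld zs (z t)) \<theta>)
      \<le> sigma_max z \<theta> * sqrt (2 * lco_kld zs (z \<theta>))"
    by (rule norm_gradient_comp_le[OF diff has_derivative_lco_kld norm_lco_kld_gradient_le])
  from mse lch kld show ?thesis by (simp only: mult_ac)
qed

end
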